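(* Let $m\geq 2$ and $n\geq 2$ be integers, let $T_m$ be a tree of order $m$ and $H_n$ a graph of order $n$. Then $rvc(T_m\diamond H_n)=rvc(T_m)$.
   Context: All graphs are finite, simple, connected and undirected. A rainbow vertex $k$-coloring of $G$ is a map $c:V(G)\to\{1,\dots,k\}$ such that every two vertices are joined by a path whose internal vertices all receive distinct colors; $rvc(G)$ is the least $k$ for which $G$ has one. For graphs $G_m$ (order $m$) and $H_n$ (order $n$) on disjoint vertex sets, the edge corona $G_m\diamond H_n$ is obtained from one copy of $G_m$ and $|E(G_m)|$ vertex-disjoint copies of $H_n$, one per edge of $G_m$, by joining both end vertices of the $j$-th edge of $G_m$ to every vertex of the $j$-th copy of $H_n$. *)

theory Defs
  imports Main
begin

definition simple_graph :: "'a set \<Rightarrow> 'a set set \<Rightarrow> bool" where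
  "simple_graph V E \<longleftrightarrow> finite V \<and> (\<forall>e\<in>E. \<exists>u v. u \<noteq> v \<and> u \<in> V \<and> v \<in> V \<and> e = {u, v})"

definition is_path :: "'a set \<Rightarrow> 'a set set \<Rightarrow> 'a list \<Rightarrow> 'a \<Rightarrow> 'a \<Rightarrow> bool" where
  "is_path V E xs u v \<longleftrightarrow> xs \<noteq> [] \<and> hd xs = u \<and> last xs = v \<and> distinct xs \<and>
     set xs \<subseteq> V \<and> (\<forall>i. Suc i < length xs \<longrightarrow> {xs ! i, xs ! Suc i} \<in> E)"

definition graph_connected :: "'a set \<Rightarrow> 'a set set \<Rightarrow> bool" where
  "graph_connected V E \<longleftrightarrow> V \<noteq> {} \<and> (\<forall>u\<in>V. \<forall>v\<in>V. \<exists>xs. is_path V E xs u v)"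

definition is_cycle :: "'a set \<Rightarrow> 'a set set \<Rightarrow> 'a list \<Rightarrow> bool" where
  "is_cycle V E xs \<longleftrightarrow> length xs \<ge> 3 \<and> distinct xs \<and> set xs \<subseteq> V \<and>
     (\<forall>i. Suc i < length xs \<longrightarrow> {xs ! i, xs ! Suc i} \<in> E) \<and> {last xs, hd xs} \<in> E"

definition is_tree :: "'a set \<Rightarrow> 'a set set \<Rightarrow> bool" where
  "is_tree V E \<longleftrightarrow> simple_graph V E \<and> graph_connected V E \<and> \<not> (\<exists>xs. is_cycle V E xs)"

definition internal :: "'a list \<Rightarrow> 'a set" where
  "internal xs = set (butlast (tl xs))"

definition rainbow_vertex_coloring :: "'a set \<Rightarrow> 'a set set \<Rightarrow> ('a \<Rightarrow> nat) \<Rightarrow> nat \<Rightarrow> bool" where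
  "rainbow_vertex_coloring V E c k \<longleftrightarrow> c ` V \<subseteq> {1..k} \<and>
     (\<forall>u\<in>V. \<forall>v\<in>V. \<exists>xs. is_path V E xs u v \<and> inj_on c (internal xs))"

definition rvc :: "'a set \<Rightarrow> 'a set set \<Rightarrow> nat" where
  "rvc V E = (LEAST k. \<exists>c. rainbow_vertex_coloring V E c k)"

text \<open>Edge corona G \<diamond> H: vertices are Inl v (v a vertex of G) and Inr (e, h),
  the copy of vertex h of H attached to the edge e of G.\<close>
definition corona_V :: "'a set \<Rightarrow> 'a set set \<Rightarrow> 'b set \<Rightarrow> ('a + ('a set \<times> 'b)) set" where
  "corona_V VG EG VH = Inl ` VG \<union> {Inr (e, h) | e h. e \<in> EG \<and> h \<in> VH}"

definition corona_E :: "'a set \<Rightarrow> 'a set set \<Rightarrow> 'b set \<Rightarrow> 'b set set \<Rightarrow> ('a + ('a set \<times> 'b)) set set" where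
  "corona_E VG EG VH EH =
     (image Inl) ` EG
     \<union> {{Inr (e, x), Inr (e, y)} | e x y. e \<in> EG \<and> {x, y} \<in> EH}
     \<union> {{Inl u, Inr (e, h)} | e u h. e \<in> EG \<and> u \<in> e \<and> h \<in> VH}"

end

theory Submission
  imports Defs
begin

text \<open>
  Colour every vertex of every copy of H with 1 and keep a rainbow colouring of T on T. As paths
  in a tree are unique, every path of T is then rainbow. A vertex of the copy of H attached to an
  edge e is reached from a vertex or from another edge e' through a shortest path in T to e; it
  meets e (and e') only in its end vertices, so prolonged by the other end of e (and of e') it is
  still a path of T, whose interior contains all internal vertices used. Hence vertices of copies
  of H are never internal vertices of the chosen paths. Conversely, deleting the
  vertices of the copies of H from a rainbow path of the corona between two vertices of T leaves
  a rainbow path of T, since a detour through the copy of H attached to an edge {a, b} leads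
  from a to b.
\<close>

lemma is_path_iff_successively:
  "is_path V E xs u v \<longleftrightarrow> xs \<noteq> [] \<and> hd xs = u \<and> last xs = v \<and> distinct xs \<and>
     set xs \<subseteq> V \<and> successively (\<lambda>x y. {x, y} \<in> E) xs"
  unfolding is_path_def successively_conv_nth by blast

lemma is_path_rev: "is_path V E xs u v \<Longrightarrow> is_path V E (rev xs) v u"
  unfolding is_path_iff_successively
  by (auto simp: hd_rev last_rev insert_commute elim: successively_mono)

lemma is_path_prefix: "is_path V E (xs @ w # ys) u v \<Longrightarrow> is_path V E (xs @ [w]) u w"
  unfolding is_path_iff_successively
  by (auto simp: successively_append_iff hd_append split: if_splits)

lemma is_path_suffix: "is_path V E (xs @ w # ys) u v \<Longrightarrow> is_path V E (w # ys) w v"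
  unfolding is_path_iff_successively by (auto simp: successively_append_iff)

lemma is_path_snoc:
  "is_path V E xs u v \<Longrightarrow> w \<notin> set xs \<Longrightarrow> w \<in> V \<Longrightarrow> {v, w} \<in> E \<Longrightarrow>
    is_path V E (xs @ [w]) u w"
  unfolding is_path_iff_successively by (auto simp: successively_append_iff hd_append)

lemma is_path_Cons:
  "is_path V E xs u v \<Longrightarrow> w \<notin> set xs \<Longrightarrow> w \<in> V \<Longrightarrow> {w, u} \<in> E \<Longrightarrow>
    is_path V E (w # xs) w v"
  unfolding is_path_iff_successively by (auto simp: successively_Cons)

lemma is_path_ends_eq: "is_path V E xs u u \<Longrightarrow> xs = [u]"
  unfolding is_path_def by (cases xs rule: rev_cases) (auto split: if_splits simp: hd_append)

lemma simple_graph_edge_neq: "simple_graph V E \<Longrightarrow> {a, b} \<in> E \<Longrightarrow> a \<noteq> b"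
  unfolding simple_graph_def by (metis doubleton_eq_iff)

lemma simple_graph_other_end:
  assumes "simple_graph V E" and "e \<in> E" and "a \<in> e"
  obtains b where "e = {a, b}" and "a \<noteq> b"
proof -
  obtain u v where "u \<noteq> v" and e: "e = {u, v}" using assms(1,2) unfolding simple_graph_def by blast
  with assms(3) consider "a = u" | "a = v" by blast
  then show thesis using that \<open>u \<noteq> v\<close> e by cases (metis insert_commute)+
qed

lemma simple_graph_edge_subset: "simple_graph V E \<Longrightarrow> e \<in> E \<Longrightarrow> e \<subseteq> V"
  unfolding simple_graph_def by auto

lemma simple_graph_edge_nonempty: "simple_graph V E \<Longrightarrow> e \<in> E \<Longrightarrow> e \<noteq> {}"
  unfolding simple_graph_def by auto

lemma is_tree_simple_graph: "is_tree V E \<Longrightarrow> simple_graph V E"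
  unfolding is_tree_def by blast

lemma is_tree_connected: "is_tree V E \<Longrightarrow> graph_connected V E"
  unfolding is_tree_def by blast

lemma tree_path_edge:
  assumes tree: "is_tree V E" and edge: "{a, b} \<in> E" and path: "is_path V E xs a b"
  shows "xs = [a, b]"
proof -
  have "a \<noteq> b" using simple_graph_edge_neq[OF is_tree_simple_graph[OF tree] edge] .
  have "\<not> is_cycle V E xs" using tree unfolding is_tree_def by blast
  moreover have "{last xs, hd xs} \<in> E" using path edge by (simp add: is_path_def insert_commute)
  ultimately have "length xs < 3" using path unfolding is_path_def is_cycle_def by auto
  with path \<open>a \<noteq> b\<close> show ?thesis
    unfolding is_path_def
    by (cases xs; cases "tl xs"; auto simp: length_Suc_conv split: if_splits)
qed

text \<open>The penultimate vertex v' of the first path either lies on the second one, which then also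
  ends with the edge {v', v}, or appending v' to the second path gives a second path to v'.\<close>
lemma tree_path_unique:
  assumes tree: "is_tree V E"
  shows "is_path V E xs u v \<Longrightarrow> is_path V E ys u v \<Longrightarrow> xs = ys"
proof (induction xs arbitrary: v ys rule: rev_induct)
  case Nil
  then show ?case by (simp add: is_path_def)
next
  case (snoc w xs)
  have w: "w = v" using snoc.prems(1) by (simp add: is_path_def)
  show ?case
  proof (cases "xs = []")
    case True
    then have "u = v" using snoc.prems(1) w by (simp add: is_path_def)
    then show ?thesis using True w is_path_ends_eq[OF snoc.prems(2)[unfolded \<open>u = v\<close>]] by simp
  next
    case False
    define v' where "v' = last xs"
    have path': "is_path V E xs u v'" and edge: "{v', v} \<in> E" and "v \<notin> set xs"
      using snoc.prems(1) False w unfolding is_path_iff_successively v'_def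
      by (auto simp: successively_append_iff hd_append)
    show ?thesis
    proof (cases "v' \<in> set ys")
      case True
      then obtain ys1 ys2 where ys: "ys = ys1 @ v' # ys2" by (meson split_list)
      have "xs = ys1 @ [v']"
        using snoc.IH[OF path' is_path_prefix] snoc.prems(2) ys by blast
      moreover have "v' # ys2 = [v', v]"
        using tree_path_edge[OF tree edge is_path_suffix] snoc.prems(2) ys by blast
      ultimately show ?thesis using ys w by simp
    next
      case False
      have "v' \<in> V" using path' unfolding is_path_def by (auto simp: v'_def)
      then have "is_path V E (ys @ [v']) u v'"
        using is_path_snoc[OF snoc.prems(2) False] edge by (simp add: insert_commute)
      then have "xs = ys @ [v']" using snoc.IH[OF path'] by blast
      then have "v \<in> set xs" using snoc.prems(2) unfolding is_path_def by auto
      with \<open>v \<notin> set xs\<close> show ?thesis by blast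
    qed
  qed
qed

lemma tree_rainbow_path:
  assumes "is_tree V E" and "rainbow_vertex_coloring V E c k" and path: "is_path V E xs u v"
  shows "inj_on c (internal xs)"
proof -
  have "u \<in> V" "v \<in> V" using path unfolding is_path_def by auto
  then obtain ys where "is_path V E ys u v" "inj_on c (internal ys)"
    using assms(2) unfolding rainbow_vertex_coloring_def by blast
  with tree_path_unique[OF assms(1) path] show ?thesis by simp
qed

text \<open>A shortest path from A to B meets A and B only in its end vertices.\<close>
lemma obtain_path_between_sets:
  assumes "graph_connected V E" and "A \<noteq> {}" and "B \<noteq> {}" and "A \<subseteq> V" and "B \<subseteq> V"
  obtains xs a' b' where "is_path V E xs a' b'" and "set xs \<inter> A = {a'}" and "set xs \<inter> B = {b'}"
proof -
  let ?joins = "\<lambda>xs. \<exists>a'\<in>A. \<exists>b'\<in>B. is_path V E xs a' b'"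
  obtain a b where "a \<in> A" "b \<in> B" using assms(2,3) by auto
  then have "a \<in> V" "b \<in> V" using assms(4,5) by auto
  then obtain xs0 where "is_path V E xs0 a b" using assms(1) unfolding graph_connected_def by blast
  then have "?joins xs0" using \<open>a \<in> A\<close> \<open>b \<in> B\<close> by auto
  then have "\<exists>xs. ?joins xs \<and> (\<forall>ys. ?joins ys \<longrightarrow> length xs \<le> length ys)"
    by (rule ex_has_least_nat)
  then obtain xs where "?joins xs" and shortest: "\<forall>ys. ?joins ys \<longrightarrow> length xs \<le> length ys"
    by (elim exE conjE)
  then obtain a' b' where "a' \<in> A" "b' \<in> B" and path: "is_path V E xs a' b'" by blast
  have "w = a'" if "w \<in> set xs" "w \<in> A" for w
  proof (rule ccontr)
    assume "w \<noteq> a'"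
    obtain ys zs where xs: "xs = ys @ w # zs" using \<open>w \<in> set xs\<close> by (meson split_list)
    with path \<open>w \<noteq> a'\<close> have "ys \<noteq> []" unfolding is_path_def by auto
    moreover have "?joins (w # zs)" using is_path_suffix path xs \<open>w \<in> A\<close> \<open>b' \<in> B\<close> by metis
    ultimately show False using shortest xs by fastforce
  qed
  moreover have "w = b'" if "w \<in> set xs" "w \<in> B" for w
  proof (rule ccontr)
    assume "w \<noteq> b'"
    obtain ys zs where xs: "xs = ys @ w # zs" using \<open>w \<in> set xs\<close> by (meson split_list)
    with path \<open>w \<noteq> b'\<close> have "zs \<noteq> []" unfolding is_path_def by auto
    moreover have "?joins (ys @ [w])" using is_path_prefix path xs \<open>w \<in> B\<close> \<open>a' \<in> A\<close> by metis
    ultimately show False using shortest xs by fastforce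
  qed
  moreover have "a' \<in> set xs" "b' \<in> set xs" using path unfolding is_path_def by auto
  ultimately show ?thesis using that path \<open>a' \<in> A\<close> \<open>b' \<in> B\<close> by blast
qed

lemma internal_Cons_snoc [simp]: "internal (x # xs @ [y]) = set xs"
  unfolding internal_def by simp

lemma internal_snoc: "xs \<noteq> [] \<Longrightarrow> internal (xs @ [y]) = set (tl xs)"
  unfolding internal_def by (cases xs) auto

lemma internal_map: "internal (map f xs) = f ` internal xs"
  unfolding internal_def by (metis map_butlast map_tl set_map)

lemma internal_rev: "internal (rev xs) = internal xs"
  unfolding internal_def by (cases xs; cases "tl xs" rule: rev_cases) auto

definition rainbow_connected :: "'a set \<Rightarrow> 'a set set \<Rightarrow> ('a \<Rightarrow> nat) \<Rightarrow> 'a \<Rightarrow> 'a \<Rightarrow> bool" where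
  "rainbow_connected V E c u v \<longleftrightarrow> (\<exists>xs. is_path V E xs u v \<and> inj_on c (internal xs))"

lemma rainbow_connectedI:
  "is_path V E xs u v \<Longrightarrow> inj_on c (internal xs) \<Longrightarrow> rainbow_connected V E c u v"
  unfolding rainbow_connected_def by blast

lemma rainbow_connected_sym: "rainbow_connected V E c u v \<Longrightarrow> rainbow_connected V E c v u"
  unfolding rainbow_connected_def using is_path_rev internal_rev by metis

lemma rainbow_vertex_coloring_iff_connected:
  "rainbow_vertex_coloring V E c k \<longleftrightarrow>
     c ` V \<subseteq> {1..k} \<and> (\<forall>u\<in>V. \<forall>v\<in>V. rainbow_connected V E c u v)"
  unfolding rainbow_vertex_coloring_def rainbow_connected_def ..

lemma corona_V_Inl [simp]: "Inl v \<in> corona_V VG EG VH \<longleftrightarrow> v \<in> VG"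
  unfolding corona_V_def by auto

lemma corona_V_Inr [simp]: "Inr (e, h) \<in> corona_V VG EG VH \<longleftrightarrow> e \<in> EG \<and> h \<in> VH"
  unfolding corona_V_def by auto

lemma corona_E_Inl_Inl [simp]: "{Inl a, Inl b} \<in> corona_E VG EG VH EH \<longleftrightarrow> {a, b} \<in> EG"
proof -
  have img: "{Inl a, Inl b} = Inl ` {a, b}" by simp
  have "{Inl a, Inl b} \<in> image Inl ` EG \<longleftrightarrow> {a, b} \<in> EG"
    unfolding img by (auto simp: inj_image_eq_iff simp del: image_insert image_empty)
  then show ?thesis by (auto simp: corona_E_def doubleton_eq_iff)
qed

lemma corona_E_Inl_Inr [simp]:
  "{Inl a, Inr (e, h)} \<in> corona_E VG EG VH EH \<longleftrightarrow> e \<in> EG \<and> a \<in> e \<and> h \<in> VH"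
  by (auto simp: corona_E_def doubleton_eq_iff)

lemma corona_E_Inr_Inl [simp]:
  "{Inr (e, h), Inl a} \<in> corona_E VG EG VH EH \<longleftrightarrow> e \<in> EG \<and> a \<in> e \<and> h \<in> VH"
  by (simp add: insert_commute)

lemma corona_E_Inr_Inr_same_edge:
  "{Inr (e, h), Inr (e', h')} \<in> corona_E VG EG VH EH \<Longrightarrow> e = e'"
  by (auto simp: corona_E_def doubleton_eq_iff)

lemma corona_V_cases:
  assumes "p \<in> corona_V VG EG VH"
  obtains (Inl) v where "p = Inl v" and "v \<in> VG"
    | (Inr) e h where "p = Inr (e, h)" and "e \<in> EG" and "h \<in> VH"
  using assms unfolding corona_V_def by blast

lemma is_path_corona_map_Inl:
  assumes "is_path VG EG xs u v"
  shows "is_path (corona_V VG EG VH) (corona_E VG EG VH EH) (map Inl xs) (Inl u) (Inl v)"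
proof -
  have "successively (\<lambda>x y. {x, y} \<in> corona_E VG EG VH EH) (map Inl xs)"
    using assms unfolding is_path_iff_successively successively_map by simp
  with assms show ?thesis
    unfolding is_path_iff_successively by (auto simp: hd_map last_map distinct_map)
qed

lemma inj_on_case_sum_Inl_image: "inj_on (case_sum f g) (Inl ` A) \<longleftrightarrow> inj_on f A"
  by (auto simp: inj_on_def)

context
  fixes VT :: "'a set" and ET :: "'a set set" and VH :: "'b set" and EH :: "'b set set"
    and c :: "'a \<Rightarrow> nat" and k :: nat
  assumes tree: "is_tree VT ET" and rainbow: "rainbow_vertex_coloring VT ET c k"
begin

lemma corona_rainbow_connected_Inl_Inl:
  assumes "x \<in> VT" and "y \<in> VT"
  shows "rainbow_connected (corona_V VT ET VH) (corona_E VT ET VH EH) (case_sum c (\<lambda>_. 1))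
    (Inl x) (Inl y)"
proof -
  obtain xs where "is_path VT ET xs x y" and "inj_on c (internal xs)"
    using rainbow assms unfolding rainbow_vertex_coloring_def by blast
  then show ?thesis
    by (intro rainbow_connectedI[OF is_path_corona_map_Inl])
      (simp_all add: internal_map inj_on_case_sum_Inl_image)
qed

lemma corona_rainbow_connected_Inl_Inr:
  assumes x: "x \<in> VT" and e: "e \<in> ET" and h: "h \<in> VH"
  shows "rainbow_connected (corona_V VT ET VH) (corona_E VT ET VH EH) (case_sum c (\<lambda>_. 1))
    (Inl x) (Inr (e, h))"
proof -
  have sg: "simple_graph VT ET" using tree by (rule is_tree_simple_graph)
  obtain xs x' t where "is_path VT ET xs x' t" and "set xs \<inter> {x} = {x'}"
    and near: "set xs \<inter> e = {t}"
    by (rule obtain_path_between_sets[OF is_tree_connected[OF tree] insert_not_empty[of x "{}"]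
          simple_graph_edge_nonempty[OF sg e] _ simple_graph_edge_subset[OF sg e]])
      (use x in auto)
  then have path: "is_path VT ET xs x t" by auto
  have "t \<in> e" using near by blast
  obtain s where "e = {t, s}" "t \<noteq> s" using simple_graph_other_end[OF sg e \<open>t \<in> e\<close>] .
  then have "s \<notin> set xs" "s \<in> VT" "{t, s} \<in> ET"
    using near e simple_graph_edge_subset[OF sg e] by auto
  then have "is_path VT ET (xs @ [s]) x s" by (rule is_path_snoc[OF path])
  then have "inj_on c (internal (xs @ [s]))" by (rule tree_rainbow_path[OF tree rainbow])
  moreover have "internal (map Inl xs @ [Inr (e, h)]) = Inl ` internal (xs @ [s])"
    using path by (simp add: internal_snoc is_path_def flip: map_tl)
  ultimately have "inj_on (case_sum c (\<lambda>_. 1)) (internal (map Inl xs @ [Inr (e, h)]))"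
    by (simp add: inj_on_case_sum_Inl_image)
  moreover have "is_path (corona_V VT ET VH) (corona_E VT ET VH EH) (map Inl xs @ [Inr (e, h)])
      (Inl x) (Inr (e, h))"
    by (rule is_path_snoc[OF is_path_corona_map_Inl[OF path]]) (use \<open>t \<in> e\<close> e h in auto)
  ultimately show ?thesis by (rule rainbow_connectedI[rotated])
qed

lemma corona_rainbow_connected_Inr_Inr:
  assumes e: "e \<in> ET" "h \<in> VH" and e': "e' \<in> ET" "h' \<in> VH"
  shows "rainbow_connected (corona_V VT ET VH) (corona_E VT ET VH EH) (case_sum c (\<lambda>_. 1))
    (Inr (e, h)) (Inr (e', h'))"
proof -
  have sg: "simple_graph VT ET" using tree by (rule is_tree_simple_graph)
  have sub: "e \<subseteq> VT" "e' \<subseteq> VT" using simple_graph_edge_subset[OF sg] e e' by auto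
  consider "(e, h) = (e', h')" | w where "(e, h) \<noteq> (e', h')" "w \<in> e" "w \<in> e'" | "e \<inter> e' = {}"
    by blast
  then show ?thesis
  proof cases
    case 1
    then show ?thesis
      by (intro rainbow_connectedI[of _ _ "[Inr (e, h)]"])
        (use e e' in \<open>auto simp: is_path_def internal_def\<close>)
  next
    case 2
    with e e' sub show ?thesis
      by (intro rainbow_connectedI[of _ _ "[Inr (e, h), Inl w, Inr (e', h')]"])
        (auto simp: is_path_def internal_def less_Suc_eq nth_Cons')
  next
    case disjoint: 3
    obtain xs t t' where path: "is_path VT ET xs t t'"
      and near: "set xs \<inter> e = {t}" and near': "set xs \<inter> e' = {t'}"
      by (rule obtain_path_between_sets[OF is_tree_connected[OF tree]
            simple_graph_edge_nonempty[OF sg e(1)] simple_graph_edge_nonempty[OF sg e'(1)] sub])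
    have "t \<in> e" "t' \<in> e'" using near near' by auto
    obtain s where s: "e = {t, s}" "t \<noteq> s" using simple_graph_other_end[OF sg e(1) \<open>t \<in> e\<close>] .
    obtain s' where s': "e' = {t', s'}" "t' \<noteq> s'"
      using simple_graph_other_end[OF sg e'(1) \<open>t' \<in> e'\<close>] .
    have "s \<in> e" "s' \<in> e'" using s(1) s'(1) by blast+
    have "s \<notin> set xs" using near s(2) \<open>s \<in> e\<close> by auto
    have "s' \<notin> set xs" using near' s'(2) \<open>s' \<in> e'\<close> by auto
    have "s \<noteq> s'" using disjoint \<open>s \<in> e\<close> \<open>s' \<in> e'\<close> by blast
    have "is_path VT ET (s # xs @ [s']) s s'"
    proof (rule is_path_Cons[OF is_path_snoc[OF path]])
      show "{t', s'} \<in> ET" using e'(1) s'(1) by simp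
      show "{s, t} \<in> ET" using e(1) s(1) by (simp add: insert_commute)
    qed (use \<open>s \<notin> set xs\<close> \<open>s' \<notin> set xs\<close> \<open>s \<noteq> s'\<close> \<open>s \<in> e\<close> \<open>s' \<in> e'\<close> sub in auto)
    then have "inj_on c (internal (s # xs @ [s']))" by (rule tree_rainbow_path[OF tree rainbow])
    then have "inj_on (case_sum c (\<lambda>_. 1)) (internal (Inr (e, h) # map Inl xs @ [Inr (e', h')]))"
      by (simp add: inj_on_case_sum_Inl_image)
    moreover have "is_path (corona_V VT ET VH) (corona_E VT ET VH EH)
        (Inr (e, h) # map Inl xs @ [Inr (e', h')]) (Inr (e, h)) (Inr (e', h'))"
    proof (rule is_path_Cons[OF is_path_snoc[OF is_path_corona_map_Inl[OF path]]])
      have "e \<noteq> e'" using disjoint \<open>t \<in> e\<close> by blast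
      then show "Inr (e, h) \<notin> set (map Inl xs @ [Inr (e', h')])" by auto
    qed (use e e' \<open>t \<in> e\<close> \<open>t' \<in> e'\<close> in auto)
    ultimately show ?thesis by (rule rainbow_connectedI[rotated])
  qed
qed

lemma rainbow_vertex_coloring_corona_extend:
  "rainbow_vertex_coloring (corona_V VT ET VH) (corona_E VT ET VH EH) (case_sum c (\<lambda>_. 1)) k"
  unfolding rainbow_vertex_coloring_iff_connected
proof
  have "VT \<noteq> {}" using tree unfolding is_tree_def graph_connected_def by blast
  then have "1 \<le> k" using rainbow unfolding rainbow_vertex_coloring_def by fastforce
  then show "case_sum c (\<lambda>_. 1) ` corona_V VT ET VH \<subseteq> {1..k}"
    using rainbow unfolding rainbow_vertex_coloring_def corona_V_def by auto
next
  show "\<forall>p\<in>corona_V VT ET VH. \<forall>q\<in>corona_V VT ET VH.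
    rainbow_connected (corona_V VT ET VH) (corona_E VT ET VH EH) (case_sum c (\<lambda>_. 1)) p q"
  proof (intro ballI)
    fix p q assume "p \<in> corona_V VT ET VH" "q \<in> corona_V VT ET VH"
    then show "rainbow_connected (corona_V VT ET VH) (corona_E VT ET VH EH)
        (case_sum c (\<lambda>_. 1)) p q"
      by (elim corona_V_cases)
        (blast intro: corona_rainbow_connected_Inl_Inl corona_rainbow_connected_Inl_Inr
          corona_rainbow_connected_Inr_Inr rainbow_connected_sym[OF corona_rainbow_connected_Inl_Inr])+
  qed
qed

end

lemma corona_walk_Inr_same_edge:
  assumes "successively (\<lambda>x y. {x, y} \<in> corona_E VG EG VH EH) (Inr (e, h) # ws)"
    and "\<forall>w\<in>set ws. \<not> isl w"
  shows "\<forall>w\<in>set ws. \<exists>h'. w = Inr (e, h')"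
  using assms
proof (induction ws arbitrary: h)
  case (Cons w ws)
  obtain e' h' where w: "w = Inr (e', h')" using Cons.prems(2) by (cases w) auto
  have "{Inr (e, h), Inr (e', h')} \<in> corona_E VG EG VH EH" using Cons.prems(1) w by simp
  then have "e' = e" by (auto dest: corona_E_Inr_Inr_same_edge)
  have "successively (\<lambda>x y. {x, y} \<in> corona_E VG EG VH EH) (Inr (e, h') # ws)"
    using Cons.prems(1) w \<open>e' = e\<close> by simp
  moreover have "\<forall>w\<in>set ws. \<not> isl w" using Cons.prems(2) by simp
  ultimately have "\<forall>w\<in>set ws. \<exists>h''. w = Inr (e, h'')" by (rule Cons.IH)
  with w \<open>e' = e\<close> show ?case by simp
qed simp

lemma corona_walk_Inl_Inl_edge:
  assumes sg: "simple_graph VG EG"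
    and walk: "successively (\<lambda>x y. {x, y} \<in> corona_E VG EG VH EH) (Inl a # ws @ [Inl b])"
    and ws: "\<forall>w\<in>set ws. \<not> isl w" and "a \<noteq> b"
  shows "{a, b} \<in> EG"
proof (cases ws)
  case Nil
  then show ?thesis using walk by simp
next
  case (Cons w ws')
  then obtain e h where w: "w = Inr (e, h)" using ws by (cases w) auto
  have "successively (\<lambda>x y. {x, y} \<in> corona_E VG EG VH EH) ((Inl a # Inr (e, h) # ws') @ [Inl b])"
    using walk Cons w by simp
  then have first: "{Inl a, Inr (e, h)} \<in> corona_E VG EG VH EH"
    and run: "successively (\<lambda>x y. {x, y} \<in> corona_E VG EG VH EH) (Inr (e, h) # ws')"
    and last: "{last (Inr (e, h) # ws'), Inl b} \<in> corona_E VG EG VH EH"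
    by (simp_all only: successively_append_iff) simp_all
  have "\<forall>w\<in>set ws'. \<exists>h'. w = Inr (e, h')"
    using corona_walk_Inr_same_edge[OF run] ws Cons by simp
  then obtain h' where "last (Inr (e, h) # ws') = Inr (e, h')"
    by (cases ws' rule: rev_cases) auto
  with first last have "e \<in> EG" "a \<in> e" "b \<in> e" by simp_all
  obtain b' where "e = {a, b'}" using simple_graph_other_end[OF sg \<open>e \<in> EG\<close> \<open>a \<in> e\<close>] .
  with \<open>b \<in> e\<close> \<open>a \<noteq> b\<close> \<open>e \<in> EG\<close> show ?thesis by auto
qed

lemma corona_walk_project:
  assumes sg: "simple_graph VG EG"
  shows "successively (\<lambda>x y. {x, y} \<in> corona_E VG EG VH EH) xs \<Longrightarrow> distinct xs \<Longrightarrow>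
    isl (hd xs) \<Longrightarrow> isl (last xs) \<Longrightarrow>
    successively (\<lambda>x y. {x, y} \<in> EG) (map projl (filter isl xs))"
proof (induction "length xs" arbitrary: xs rule: less_induct)
  case less
  show ?case
  proof (cases "\<exists>x\<in>set (tl xs). isl x")
    case False
    then have "filter isl xs = take 1 xs"
      using less.prems(3) by (cases xs) (auto simp: filter_empty_conv)
    then show ?thesis by (cases xs) simp_all
  next
    case True
    then obtain x rest where xs_rest: "xs = x # rest" and "\<exists>y\<in>set rest. isl y" by (cases xs) auto
    obtain ws z zs where "rest = ws @ z # zs" and "isl z" and ws: "\<forall>y\<in>set ws. \<not> isl y"
      using \<open>\<exists>y\<in>set rest. isl y\<close> by (rule split_list_first_propE)
    with xs_rest have xs: "xs = x # ws @ z # zs" by simp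
    obtain a b where x: "x = Inl a" and z: "z = Inl b"
      using less.prems(3) \<open>isl z\<close> xs by (cases x; cases z) auto
    have "successively (\<lambda>x y. {x, y} \<in> corona_E VG EG VH EH) ((Inl a # ws @ [Inl b]) @ zs)"
      using less.prems(1) xs x z by simp
    then have "successively (\<lambda>x y. {x, y} \<in> corona_E VG EG VH EH) (Inl a # ws @ [Inl b])"
      by (simp only: successively_append_iff)
    moreover have "a \<noteq> b" using less.prems(2) xs x z by auto
    ultimately have "{a, b} \<in> EG" by (rule corona_walk_Inl_Inl_edge[OF sg _ ws])
    moreover have "successively (\<lambda>x y. {x, y} \<in> EG) (map projl (filter isl (z # zs)))"
    proof (rule less.hyps)
      show "length (z # zs) < length xs" using xs by simp
      have "successively (\<lambda>x y. {x, y} \<in> corona_E VG EG VH EH) ((x # ws) @ (z # zs))"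
        using less.prems(1) xs by simp
      then show "successively (\<lambda>x y. {x, y} \<in> corona_E VG EG VH EH) (z # zs)"
        by (simp only: successively_append_iff)
      show "distinct (z # zs)" using less.prems(2) xs by simp
      show "isl (hd (z # zs))" "isl (last (z # zs))" using \<open>isl z\<close> less.prems(4) xs by simp_all
    qed
    moreover have "map projl (filter isl xs) = a # map projl (filter isl (z # zs))"
      using xs x ws by (simp add: filter_empty_conv)
    ultimately show ?thesis using z by simp
  qed
qed

lemma internal_map_projl_filter_isl:
  assumes "isl (hd xs)" and "isl (last xs)"
  shows "Inl ` internal (map projl (filter isl xs)) \<subseteq> internal xs"
proof (cases xs)
  case (Cons x ys)
  show ?thesis
  proof (cases ys rule: rev_cases)
    case Nil
    with Cons show ?thesis by (simp add: internal_def)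
  next
    case (snoc mid y)
    with Cons assms have "map projl (filter isl xs) = projl x # map projl (filter isl mid) @ [projl y]"
      by simp
    with Cons snoc show ?thesis by auto
  qed
qed (simp add: internal_def)

lemma rainbow_vertex_coloring_corona_restrict:
  assumes sg: "simple_graph VG EG"
    and rainbow: "rainbow_vertex_coloring (corona_V VG EG VH) (corona_E VG EG VH EH) c k"
  shows "rainbow_vertex_coloring VG EG (c \<circ> Inl) k"
  unfolding rainbow_vertex_coloring_iff_connected
proof (intro conjI ballI)
  show "(c \<circ> Inl) ` VG \<subseteq> {1..k}"
    using rainbow unfolding rainbow_vertex_coloring_def by auto
next
  fix u v assume "u \<in> VG" "v \<in> VG"
  then obtain xs where path: "is_path (corona_V VG EG VH) (corona_E VG EG VH EH) xs (Inl u) (Inl v)"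
    and inj: "inj_on c (internal xs)"
    using rainbow unfolding rainbow_vertex_coloring_def by (metis corona_V_Inl)
  have ends: "hd xs = Inl u" "last xs = Inl v" and "xs \<noteq> []"
    using path unfolding is_path_def by simp_all
  define ys where "ys = map projl (filter isl xs)"
  have "is_path VG EG ys u v"
    unfolding is_path_iff_successively
  proof (intro conjI)
    obtain rest where "xs = Inl u # rest" using ends \<open>xs \<noteq> []\<close> by (cases xs) auto
    then show "ys \<noteq> []" "hd ys = u" unfolding ys_def by simp_all
    obtain init where "xs = init @ [Inl v]" using ends \<open>xs \<noteq> []\<close> by (metis append_butlast_last_id)
    then show "last ys = v" unfolding ys_def by simp
    have "inj_on projl (set (filter isl xs))" by (auto simp: inj_on_def isl_def)
    then show "distinct ys" using path unfolding ys_def is_path_def by (simp add: distinct_map)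
    show "set ys \<subseteq> VG" using path unfolding ys_def is_path_def by (auto simp: isl_def)
    have "successively (\<lambda>x y. {x, y} \<in> corona_E VG EG VH EH) xs" "distinct xs"
      using path unfolding is_path_iff_successively by simp_all
    from corona_walk_project[OF sg this] ends show "successively (\<lambda>x y. {x, y} \<in> EG) ys"
      unfolding ys_def by simp
  qed
  moreover have "inj_on (c \<circ> Inl) (internal ys)"
  proof (rule comp_inj_on)
    show "inj_on Inl (internal ys)" by simp
    show "inj_on c (Inl ` internal ys)"
      using inj_on_subset[OF inj internal_map_projl_filter_isl] ends unfolding ys_def by simp
  qed
  ultimately show "rainbow_connected VG EG (c \<circ> Inl) u v" by (rule rainbow_connectedI)
qed

theorem theorem4:
  fixes VT :: "'a set" and ET :: "'a set set" and VH :: "'b set" and EH :: "'b set set"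
    and m n :: nat
  assumes "m \<ge> 2" and "n \<ge> 2"
    and "is_tree VT ET" and "card VT = m"
    and "simple_graph VH EH" and "graph_connected VH EH" and "card VH = n"
  shows "rvc (corona_V VT ET VH) (corona_E VT ET VH EH) = rvc VT ET"
proof -
  have "(\<exists>c. rainbow_vertex_coloring (corona_V VT ET VH) (corona_E VT ET VH EH) c k) \<longleftrightarrow>
      (\<exists>c. rainbow_vertex_coloring VT ET c k)" for k
    using rainbow_vertex_coloring_corona_restrict[OF is_tree_simple_graph[OF assms(3)]]
      rainbow_vertex_coloring_corona_extend[OF assms(3)]
    by metis
  then show ?thesis unfolding rvc_def by simp
qed

end
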